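(* Let $N:\mathbb{R}\to[0,1]$ be a monotone nondecreasing cumulative distribution function whose density has bounded support $[A,B]$. Then for every $\epsilon>0$ there exist support bounds $A^*<B^*$ and parameters $\theta$ of a PNN such that $$\sup_{x\in[A,B]}\bigl|N_\theta(x)-N(x)\bigr|<\epsilon,$$ where $N_\theta$ is the normalized PNN cdf with support bounds $[A^*,B^*]$.
   Context: Let $\sigma(t)=1/(1+e^{-t})$. A PNN (probabilistically normalized network) of depth $L\ge 2$ on inputs $z\in\mathbb{R}$ is the function $F_\theta$ defined by $a_0=z$, $a_\ell=\sigma(W_\ell^{T}a_{\ell-1}+c_\ell)$ for $\ell=1,\dots,L-1$ (entrywise sigmoid), and $F_\theta(z)=\beta^{T}a_{L-1}$, where every weight matrix $W_\ell$ has strictly positive entries, the biases $c_\ell$ are arbitrary real vectors, and $\beta$ is a probability vector with strictly positive entries (widths arbitrary); $\theta$ denotes all these parameters. Given support bounds $A^*<B^*$, the normalized PNN cdf is $N_\theta(x)=\frac{F_\theta(x)-F_\theta(A^* )}{F_\theta(B^* )-F_\theta(A^* )}$. *)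

theory Defs
  imports "HOL-Analysis.Analysis"
begin

definition sigmoid :: "real \<Rightarrow> real" where
  "sigmoid t = 1 / (1 + exp (- t))"

text \<open>Layer widths d :: nat => nat (d 0 = 1 is the input width), weights W l i j
  (layer l, from unit i of layer l-1 to unit j of layer l), biases c l j.
  pnn_act d W c l z is the activation vector a_l at input z.\<close>
fun pnn_act :: "(nat \<Rightarrow> nat) \<Rightarrow> (nat \<Rightarrow> nat \<Rightarrow> nat \<Rightarrow> real) \<Rightarrow> (nat \<Rightarrow> nat \<Rightarrow> real)
    \<Rightarrow> nat \<Rightarrow> real \<Rightarrow> nat \<Rightarrow> real" where
  "pnn_act d W c 0 z = (\<lambda>i. z)"
| "pnn_act d W c (Suc l) z =
     (\<lambda>j. sigmoid ((\<Sum>i<d l. W (Suc l) i j * pnn_act d W c l z i) + c (Suc l) j))"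

definition pnn_out :: "nat \<Rightarrow> (nat \<Rightarrow> nat) \<Rightarrow> (nat \<Rightarrow> nat \<Rightarrow> nat \<Rightarrow> real)
    \<Rightarrow> (nat \<Rightarrow> nat \<Rightarrow> real) \<Rightarrow> (nat \<Rightarrow> real) \<Rightarrow> real \<Rightarrow> real" where
  "pnn_out L d W c \<beta> z = (\<Sum>j<d (L - 1). \<beta> j * pnn_act d W c (L - 1) z j)"

definition valid_pnn :: "nat \<Rightarrow> (nat \<Rightarrow> nat) \<Rightarrow> (nat \<Rightarrow> nat \<Rightarrow> nat \<Rightarrow> real)
    \<Rightarrow> (nat \<Rightarrow> real) \<Rightarrow> bool" where
  "valid_pnn L d W \<beta> \<longleftrightarrow> L \<ge> 2 \<and> d 0 = 1 \<and> (\<forall>l\<in>{1..L-1}. d l \<ge> 1)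
     \<and> (\<forall>l\<in>{1..L-1}. \<forall>i<d (l - 1). \<forall>j<d l. W l i j > 0)
     \<and> (\<forall>j<d (L - 1). \<beta> j > 0) \<and> (\<Sum>j<d (L - 1). \<beta> j) = 1"

definition pnn_norm :: "nat \<Rightarrow> (nat \<Rightarrow> nat) \<Rightarrow> (nat \<Rightarrow> nat \<Rightarrow> nat \<Rightarrow> real)
    \<Rightarrow> (nat \<Rightarrow> nat \<Rightarrow> real) \<Rightarrow> (nat \<Rightarrow> real) \<Rightarrow> real \<Rightarrow> real \<Rightarrow> real \<Rightarrow> real" where
  "pnn_norm L d W c \<beta> As Bs x =
     (pnn_out L d W c \<beta> x - pnn_out L d W c \<beta> As) / (pnn_out L d W c \<beta> Bs - pnn_out L d W c \<beta> As)"

end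

theory Submission
  imports Defs
begin

(* Uniform continuity of N on [A,B] gives a grid A = t 0 < ... < t n = B on which N grows by
   less than \<epsilon>/4 per cell.  Put one sigmoid step, with a common weight w, at the midpoint of
   each cell, weighted by the growth of N over the cell mixed with a little uniform mass so that
   all weights are positive.  As w tends to infinity the normalised network converges at every
   grid point to a partial sum of the weights, which is within \<epsilon>/8 of N there.  Since the network
   and N are both monotone, the error inside a cell is bounded by the errors at its ends plus
   the growth of N over it. *)

lemma sigmoid_strict_mono: "strict_mono sigmoid"
  by (rule strict_monoI) (simp add: sigmoid_def frac_less2 add_pos_pos)

lemma sigmoid_tendsto_at_top: "(sigmoid \<longlongrightarrow> 1) at_top"
proof -
  have "((\<lambda>t. exp (- t)) \<longlongrightarrow> (0::real)) at_top"
    by (rule filterlim_compose[OF exp_at_bot filterlim_uminus_at_bot_at_top])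
  then have "((\<lambda>t. 1 / (1 + exp (- t))) \<longlongrightarrow> (1::real) / (1 + 0)) at_top"
    by (intro tendsto_intros) simp_all
  then show ?thesis
    by (simp add: sigmoid_def [abs_def])
qed

lemma sigmoid_tendsto_at_bot: "(sigmoid \<longlongrightarrow> 0) at_bot"
proof -
  have "((\<lambda>t. exp t / (1 + exp t)) \<longlongrightarrow> (0::real) / (1 + 0)) at_bot"
    by (intro tendsto_intros exp_at_bot) simp_all
  moreover have "sigmoid = (\<lambda>t. exp t / (1 + exp t))"
    by (simp add: fun_eq_iff sigmoid_def exp_minus field_simps)
  ultimately show ?thesis
    by simp
qed

lemma sigmoid_steepen_tendsto:
  assumes "u \<noteq> 0"
  shows "((\<lambda>w. sigmoid (w * u)) \<longlongrightarrow> (if 0 < u then 1 else 0)) at_top"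
proof (cases "0 < u")
  case True
  then have "filterlim (\<lambda>w. w * u) at_top at_top"
    by (rule filterlim_at_top_mult_tendsto_pos[OF tendsto_const _ filterlim_ident])
  with True show ?thesis
    using filterlim_compose[OF sigmoid_tendsto_at_top] by simp
next
  case False
  with assms have "filterlim (\<lambda>w. u * w) at_bot at_top"
    by (intro filterlim_tendsto_neg_mult_at_bot[OF tendsto_const _ filterlim_ident]) simp
  with False show ?thesis
    using filterlim_compose[OF sigmoid_tendsto_at_bot] by (simp add: mult.commute)
qed

lemma pnn_out_shallow:
  "pnn_out 2 (\<lambda>l. if l = 0 then 1 else n) (\<lambda>l i j. a j) (\<lambda>l j. b j) \<beta> z
     = (\<Sum>j<n. \<beta> j * sigmoid (a j * z + b j))"
  by (simp add: pnn_out_def numeral_2_eq_2)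

lemma valid_pnn_shallow:
  "valid_pnn 2 (\<lambda>l. if l = 0 then 1 else n) (\<lambda>l i j. a j) \<beta> \<longleftrightarrow>
     0 < n \<and> (\<forall>j<n. 0 < a j) \<and> (\<forall>j<n. 0 < \<beta> j) \<and> (\<Sum>j<n. \<beta> j) = 1"
  by (auto simp: valid_pnn_def numeral_2_eq_2)

definition staircase :: "nat \<Rightarrow> (nat \<Rightarrow> real) \<Rightarrow> (nat \<Rightarrow> real) \<Rightarrow> real \<Rightarrow> real \<Rightarrow> real" where
  "staircase n \<beta> s w z = (\<Sum>j<n. \<beta> j * sigmoid (w * (z - s j)))"

lemma staircase_mono:
  assumes "0 \<le> w" "\<And>j. j < n \<Longrightarrow> 0 \<le> \<beta> j"
  shows "mono (staircase n \<beta> s w)"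
proof (rule monoI)
  fix x y :: real assume "x \<le> y"
  with assms have "sigmoid (w * (x - s j)) \<le> sigmoid (w * (y - s j))" for j
    by (intro strict_mono_mono[OF sigmoid_strict_mono, THEN monoD] mult_left_mono) simp_all
  with assms show "staircase n \<beta> s w x \<le> staircase n \<beta> s w y"
    unfolding staircase_def by (intro sum_mono mult_left_mono) simp_all
qed

lemma staircase_strict_mono:
  assumes "0 < w" "0 < n" "\<And>j. j < n \<Longrightarrow> 0 < \<beta> j"
  shows "strict_mono (staircase n \<beta> s w)"
proof (rule strict_monoI)
  fix x y :: real assume "x < y"
  with assms have "\<beta> j * sigmoid (w * (x - s j)) < \<beta> j * sigmoid (w * (y - s j))" if "j < n" for j
    using that sigmoid_strict_mono by (simp add: strict_mono_less)
  with assms show "staircase n \<beta> s w x < staircase n \<beta> s w y"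
    unfolding staircase_def by (intro sum_strict_mono) auto
qed

lemma staircase_tendsto:
  assumes "\<And>j. j < n \<Longrightarrow> s j \<noteq> z"
  shows "((\<lambda>w. staircase n \<beta> s w z) \<longlongrightarrow> (\<Sum>j | j < n \<and> s j < z. \<beta> j)) at_top"
proof -
  have "((\<lambda>w. sigmoid (w * (z - s j))) \<longlongrightarrow> (if s j < z then 1 else 0)) at_top" if "j < n" for j
    using sigmoid_steepen_tendsto[of "z - s j"] assms[OF that] by simp
  then have "((\<lambda>w. staircase n \<beta> s w z) \<longlongrightarrow> (\<Sum>j<n. \<beta> j * (if s j < z then 1 else 0))) at_top"
    unfolding staircase_def by (intro tendsto_sum tendsto_mult tendsto_const) simp
  also have "(\<Sum>j<n. \<beta> j * (if s j < z then 1 else 0)) = (\<Sum>j\<in>{j \<in> {..<n}. s j < z}. \<beta> j)"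
    by (subst sum.inter_filter) (auto intro: sum.cong)
  also have "{j \<in> {..<n}. s j < z} = {j. j < n \<and> s j < z}"
    by auto
  finally show ?thesis .
qed

definition normalized_staircase ::
    "nat \<Rightarrow> (nat \<Rightarrow> real) \<Rightarrow> (nat \<Rightarrow> real) \<Rightarrow> real \<Rightarrow> real \<Rightarrow> real \<Rightarrow> real \<Rightarrow> real" where
  "normalized_staircase n \<beta> s w As Bs x =
     (staircase n \<beta> s w x - staircase n \<beta> s w As) / (staircase n \<beta> s w Bs - staircase n \<beta> s w As)"

lemma pnn_norm_shallow_eq_normalized_staircase:
  "pnn_norm 2 (\<lambda>l. if l = 0 then 1 else n) (\<lambda>l i j. w) (\<lambda>l j. - w * s j) \<beta> As Bs
     = normalized_staircase n \<beta> s w As Bs"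
  by (simp add: fun_eq_iff pnn_norm_def normalized_staircase_def pnn_out_shallow
      staircase_def algebra_simps)

lemma normalized_staircase_mono:
  assumes "0 < w" "0 < n" "\<And>j. j < n \<Longrightarrow> 0 < \<beta> j" "As < Bs"
  shows "mono (normalized_staircase n \<beta> s w As Bs)"
proof -
  have "staircase n \<beta> s w As < staircase n \<beta> s w Bs"
    using staircase_strict_mono[OF assms(1-3)] \<open>As < Bs\<close> by (simp add: strict_mono_less)
  then show ?thesis
    using staircase_mono[of w n \<beta> s] assms(1,3)
    by (auto intro!: monoI divide_right_mono simp: normalized_staircase_def monoD less_imp_le)
qed

lemma normalized_staircase_tendsto:
  assumes "\<And>j. j < n \<Longrightarrow> As < s j \<and> s j < Bs" "\<And>j. j < n \<Longrightarrow> s j \<noteq> z"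
    and "(\<Sum>j<n. \<beta> j) = 1"
  shows "((\<lambda>w. normalized_staircase n \<beta> s w As Bs z) \<longlongrightarrow> (\<Sum>j | j < n \<and> s j < z. \<beta> j)) at_top"
proof -
  have lim: "((\<lambda>w. staircase n \<beta> s w y) \<longlongrightarrow> (\<Sum>j | j < n \<and> s j < y. \<beta> j)) at_top"
    if "y \<in> {z, As, Bs}" for y
    using assms(1,2) that by (intro staircase_tendsto) force
  have none: "{j. j < n \<and> s j < As} = {}" and all: "{j. j < n \<and> s j < Bs} = {..<n}"
    using assms(1) by force+
  have "(\<Sum>j | j < n \<and> s j < As. \<beta> j) = 0" "(\<Sum>j | j < n \<and> s j < Bs. \<beta> j) = 1"
    by (simp_all only: none all sum.empty assms(3))
  with lim[of z] lim[of As] lim[of Bs] show ?thesis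
    unfolding normalized_staircase_def
    using tendsto_divide[OF tendsto_diff tendsto_diff] by fastforce
qed

lemma exists_pnn_near_partial_sums:
  fixes t \<beta> :: "nat \<Rightarrow> real"
  assumes "strict_mono t" "As < t 0" "t n < Bs"
    and \<beta>_pos: "\<And>j. j < n \<Longrightarrow> 0 < \<beta> j" and \<beta>_sum: "(\<Sum>j<n. \<beta> j) = 1"
    and "0 < e"
  shows "\<exists>d W c. valid_pnn 2 d W \<beta> \<and> mono (pnn_norm 2 d W c \<beta> As Bs) \<and>
           (\<forall>i\<le>n. \<bar>pnn_norm 2 d W c \<beta> As Bs (t i) - (\<Sum>j<i. \<beta> j)\<bar> < e)"
proof -
  \<comment> \<open>Thresholds at the cell midpoints never meet a grid point, so every grid point has a limit.\<close>
  define s where "s j = (t j + t (Suc j)) / 2" for j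
  have t_less: "t i < t j \<longleftrightarrow> i < j" and t_le: "t i \<le> t j \<longleftrightarrow> i \<le> j" for i j
    using \<open>strict_mono t\<close> by (simp_all add: strict_mono_less strict_mono_less_eq)
  have s_between: "t j < s j" "s j < t (Suc j)" for j
    using t_less[of j "Suc j"] by (simp_all add: s_def)
  have s_bounds: "As < s j \<and> s j < Bs" if "j < n" for j
    using that s_between[of j] t_le[of 0 j] t_le[of "Suc j" n] assms(2,3) by simp
  have s_less_t: "s j < t i \<longleftrightarrow> j < i" and s_ne_t: "s j \<noteq> t i" for i j
    using s_between[of j] t_le[of "Suc j" i] t_le[of i j] by (cases "j < i"; force)+
  have steps_below: "(\<Sum>j | j < n \<and> s j < t i. \<beta> j) = (\<Sum>j<i. \<beta> j)" if "i \<le> n" for i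
    using that by (intro sum.cong) (auto simp: s_less_t)
  have "0 < n"
    using \<beta>_sum by (cases n) simp_all
  let ?G = "normalized_staircase n \<beta> s"
  have "\<forall>\<^sub>F w in at_top. \<forall>i\<in>{..n}. dist (?G w As Bs (t i)) (\<Sum>j<i. \<beta> j) < e"
  proof (intro eventually_ball_finite ballI)
    fix i assume "i \<in> {..n}"
    then have "((\<lambda>w. ?G w As Bs (t i)) \<longlongrightarrow> (\<Sum>j<i. \<beta> j)) at_top"
      using normalized_staircase_tendsto[of n As s Bs "t i" \<beta>] s_bounds s_ne_t \<beta>_sum steps_below
      by simp
    then show "\<forall>\<^sub>F w in at_top. dist (?G w As Bs (t i)) (\<Sum>j<i. \<beta> j) < e"
      using \<open>0 < e\<close> by (rule tendstoD)
  qed simp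
  moreover have "\<forall>\<^sub>F w in at_top. 0 < (w::real)"
    by (rule eventually_gt_at_top)
  ultimately obtain w where close: "\<forall>i\<in>{..n}. dist (?G w As Bs (t i)) (\<Sum>j<i. \<beta> j) < e" and "0 < w"
    using eventually_happens'[OF trivial_limit_at_top_linorder eventually_conj] by blast
  have "mono (?G w As Bs)"
    using normalized_staircase_mono[OF \<open>0 < w\<close> \<open>0 < n\<close> \<beta>_pos] s_bounds[OF \<open>0 < n\<close>] by force
  with close \<open>0 < n\<close> \<open>0 < w\<close> \<beta>_pos \<beta>_sum show ?thesis
    by (intro exI[of _ "\<lambda>l. if l = 0 then 1 else n"] exI[of _ "\<lambda>l i j. w"] exI[of _ "\<lambda>l j. - w * s j"])
      (unfold pnn_norm_shallow_eq_normalized_staircase, simp add: valid_pnn_shallow dist_real_def)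
qed

lemma exists_positive_weights_near_grid_values:
  fixes y :: "nat \<Rightarrow> real"
  assumes "0 < n" "0 < \<delta>" "\<delta> < 1"
    and y_mono: "\<And>i. i < n \<Longrightarrow> y i \<le> y (Suc i)"
    and y_bounds: "\<And>i. i \<le> n \<Longrightarrow> 0 \<le> y i \<and> y i \<le> 1"
    and "y 0 = 0" "y n = 1"
  shows "\<exists>\<beta>. (\<forall>j<n. 0 < \<beta> j) \<and> (\<Sum>j<n. \<beta> j) = 1 \<and> (\<forall>i\<le>n. \<bar>(\<Sum>j<i. \<beta> j) - y i\<bar> \<le> \<delta>)"
proof -
  define \<beta> where "\<beta> j = (1 - \<delta>) * (y (Suc j) - y j) + \<delta> / n" for j
  have partial_sum: "(\<Sum>j<i. \<beta> j) = (1 - \<delta>) * y i + \<delta> * (i / n)" for i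
    by (simp add: \<beta>_def sum.distrib sum_lessThan_telescope flip: sum_distrib_left) (simp add: \<open>y 0 = 0\<close>)
  have "0 < \<beta> j" if "j < n" for j
    using y_mono[OF that] assms(1-3) by (simp add: \<beta>_def add_nonneg_pos)
  moreover have "\<bar>(\<Sum>j<i. \<beta> j) - y i\<bar> \<le> \<delta>" if "i \<le> n" for i
  proof -
    have "0 \<le> i / n" "i / n \<le> 1"
      using that \<open>0 < n\<close> by (simp_all add: divide_le_eq_1)
    then have "\<bar>i / n - y i\<bar> \<le> 1"
      using y_bounds[OF that] by linarith
    then have "\<delta> * \<bar>i / n - y i\<bar> \<le> \<delta>"
      using \<open>0 < \<delta>\<close> by (simp add: mult_left_le)
    moreover have "(\<Sum>j<i. \<beta> j) - y i = \<delta> * (i / n - y i)"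
      by (simp add: partial_sum algebra_simps)
    ultimately show ?thesis
      using \<open>0 < \<delta>\<close> by (simp add: abs_mult)
  qed
  moreover have "(\<Sum>j<n. \<beta> j) = 1"
    using \<open>0 < n\<close> \<open>y n = 1\<close> by (simp add: partial_sum)
  ultimately show ?thesis
    by blast
qed

lemma exists_grid_cell:
  fixes t :: "nat \<Rightarrow> 'a::linorder"
  assumes "0 < n" "t 0 \<le> x" "x \<le> t n"
  shows "\<exists>i<n. t i \<le> x \<and> x \<le> t (Suc i)"
  using assms
proof (induction n)
  case (Suc n)
  show ?case
  proof (cases "0 < n \<and> x \<le> t n")
    case True
    with Suc.IH \<open>t 0 \<le> x\<close> show ?thesis
      using less_SucI by blast
  next
    case False
    with Suc.prems show ?thesis
      by (auto intro!: exI[of _ n] simp: not_less)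
  qed
qed simp

lemma monotone_approx_between_grid_points:
  fixes G N :: "real \<Rightarrow> real" and t :: "nat \<Rightarrow> real"
  assumes "mono G" "mono N" "0 < n" "x \<in> {t 0..t n}"
    and at_grid: "\<And>i. i \<le> n \<Longrightarrow> \<bar>G (t i) - N (t i)\<bar> \<le> e"
    and N_steps: "\<And>i. i < n \<Longrightarrow> N (t (Suc i)) - N (t i) \<le> e'"
  shows "\<bar>G x - N x\<bar> \<le> e + e'"
proof -
  obtain i where "i < n" "t i \<le> x" "x \<le> t (Suc i)"
    using exists_grid_cell[of n t x] assms(3,4) by auto
  with assms(1,2) have "G (t i) \<le> G x" "G x \<le> G (t (Suc i))" "N (t i) \<le> N x" "N x \<le> N (t (Suc i))"
    by (simp_all add: monoD)
  with at_grid[of i] at_grid[of "Suc i"] N_steps[of i] \<open>i < n\<close> show ?thesis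
    by (simp add: abs_le_iff)
qed

lemma cdf_of_density_on_interval:
  fixes N f :: "real \<Rightarrow> real"
  assumes "A < B"
    and f_vanishes: "\<And>x. x \<notin> {A..B} \<Longrightarrow> f x = 0"
    and N_integral: "\<And>x. (f has_integral N x) {..x}"
    and "(N \<longlongrightarrow> 1) at_top"
  shows "continuous_on {A..B} N" "N A = 0" "N B = 1"
proof -
  have N_from_A: "(f has_integral N x) {A..x}" if "A \<le> x" for x
  proof -
    have "((\<lambda>y. if y \<in> {A..x} then f y else 0) has_integral N x) {..x}"
      using N_integral[of x] by (rule has_integral_cong[THEN iffD2, rotated]) (auto intro: f_vanishes)
    then show ?thesis
      by (rule has_integral_restrict[THEN iffD1, rotated]) auto
  qed
  have "continuous_on {A..B} (\<lambda>x. integral {A..x} f)"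
    using N_from_A[of B] \<open>A < B\<close> by (intro indefinite_integral_continuous_1) auto
  then show "continuous_on {A..B} N"
    by (rule continuous_on_eq) (simp add: N_from_A integral_unique)
  show "N A = 0"
    using N_from_A[of A] by (simp add: has_integral_unique[OF _ has_integral_refl(2)])
  have "N x = N B" if "B \<le> x" for x
    using has_integral_on_superset[OF N_integral[of B] f_vanishes] \<open>A < B\<close> that
    by (intro has_integral_unique[OF N_integral[of x]]) auto
  then have "(N \<longlongrightarrow> N B) at_top"
    by (intro tendsto_eventually eventually_at_top_linorderI) 
  with \<open>(N \<longlongrightarrow> 1) at_top\<close> show "N B = 1"
    using tendsto_unique[OF trivial_limit_at_top_linorder] by metis
qed

lemma exists_grid_small_steps:
  fixes N :: "real \<Rightarrow> real"
  assumes "continuous_on {A..B} N" "A < B" "0 < e"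
  shows "\<exists>n t. 0 < n \<and> strict_mono t \<and> t 0 = A \<and> t n = B \<and>
           (\<forall>i<n. \<bar>N (t (Suc i)) - N (t i)\<bar> < e)"
proof -
  obtain r where "0 < r" and r: "\<And>x y. x \<in> {A..B} \<Longrightarrow> y \<in> {A..B} \<Longrightarrow> dist y x < r \<Longrightarrow> dist (N y) (N x) < e"
    using compact_uniformly_continuous[OF assms(1) compact_Icc] \<open>0 < e\<close>
    unfolding uniformly_continuous_on_def by metis
  obtain n :: nat where n: "(B - A) / r < n"
    using reals_Archimedean2 by blast
  have "0 < (B - A) / r"
    using \<open>A < B\<close> \<open>0 < r\<close> by simp
  with n have "0 < n"
    by (metis of_nat_0_less_iff order.strict_trans)
  define h where "h = (B - A) / n"
  define t where "t i = A + real i * h" for i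
  have "0 < h" "h < r"
    using n \<open>0 < n\<close> \<open>A < B\<close> \<open>0 < r\<close> by (simp_all add: h_def field_simps)
  have "strict_mono t"
    using \<open>0 < h\<close> by (intro strict_monoI) (simp add: t_def mult_strict_right_mono)
  have "t 0 = A" "t n = B"
    using \<open>0 < n\<close> by (simp_all add: t_def h_def)
  have t_in: "t i \<in> {A..B}" if "i \<le> n" for i
    using that \<open>t 0 = A\<close> \<open>t n = B\<close> strict_mono_less_eq[OF \<open>strict_mono t\<close>] by auto
  have "\<bar>N (t (Suc i)) - N (t i)\<bar> < e" if "i < n" for i
  proof -
    have "dist (t (Suc i)) (t i) < r"
      using \<open>0 < h\<close> \<open>h < r\<close> by (simp add: t_def dist_real_def distrib_right)
    then show ?thesis
      using r[OF t_in[of i] t_in[of "Suc i"]] that by (simp add: dist_real_def)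
  qed
  with \<open>0 < n\<close> \<open>strict_mono t\<close> \<open>t 0 = A\<close> \<open>t n = B\<close> show ?thesis
    by (intro exI[of _ n] exI[of _ t]) simp
qed

theorem lemma5:
  fixes N f :: "real \<Rightarrow> real" and A B :: real
  assumes "A < B"
    and "\<And>x. 0 \<le> N x \<and> N x \<le> 1"
    and "mono N"
    and "(N \<longlongrightarrow> 0) at_bot" and "(N \<longlongrightarrow> 1) at_top"
    and "\<And>x. f x \<ge> 0"
    and "\<And>x. x \<notin> {A..B} \<Longrightarrow> f x = 0"
    and "\<And>x. (f has_integral N x) {..x}"
  shows "\<forall>\<epsilon>>0. \<exists>As Bs L d W c \<beta>. As < Bs \<and> valid_pnn L d W \<beta> \<and>
           (SUP x\<in>{A..B}. \<bar>pnn_norm L d W c \<beta> As Bs x - N x\<bar>) < \<epsilon>"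
proof (intro allI impI)
  fix \<epsilon> :: real assume "0 < \<epsilon>"
  have "continuous_on {A..B} N" "N A = 0" "N B = 1"
    using cdf_of_density_on_interval[OF assms(1,7,8,5)] by blast+
  obtain n t where "0 < n" "strict_mono t" "t 0 = A" "t n = B"
    and N_steps: "\<forall>i<n. \<bar>N (t (Suc i)) - N (t i)\<bar> < \<epsilon> / 4"
    using exists_grid_small_steps[OF \<open>continuous_on {A..B} N\<close> \<open>A < B\<close>, of "\<epsilon> / 4"] \<open>0 < \<epsilon>\<close> by auto
  obtain \<beta> where "\<forall>j<n. 0 < \<beta> j" "(\<Sum>j<n. \<beta> j) = 1"
    and \<beta>_near: "\<forall>i\<le>n. \<bar>(\<Sum>j<i. \<beta> j) - N (t i)\<bar> \<le> \<epsilon> / 8"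
    using exists_positive_weights_near_grid_values[of n "min (\<epsilon> / 8) (1 / 2)" "N \<circ> t"]
      \<open>0 < n\<close> \<open>0 < \<epsilon>\<close> \<open>t 0 = A\<close> \<open>t n = B\<close> \<open>N A = 0\<close> \<open>N B = 1\<close> assms(2)
      monoD[OF \<open>mono N\<close>] strict_mono_mono[OF \<open>strict_mono t\<close>, THEN monoD]
    by fastforce
  then obtain d W c where "valid_pnn 2 d W \<beta>" and G_mono: "mono (pnn_norm 2 d W c \<beta> (A - 1) (B + 1))"
    and G_near: "\<forall>i\<le>n. \<bar>pnn_norm 2 d W c \<beta> (A - 1) (B + 1) (t i) - (\<Sum>j<i. \<beta> j)\<bar> < \<epsilon> / 8"
    using exists_pnn_near_partial_sums[of t "A - 1" n "B + 1" \<beta> "\<epsilon> / 8"]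
      \<open>strict_mono t\<close> \<open>t 0 = A\<close> \<open>t n = B\<close> \<open>0 < \<epsilon>\<close> by auto
  let ?G = "pnn_norm 2 d W c \<beta> (A - 1) (B + 1)"
  have "\<bar>?G x - N x\<bar> \<le> \<epsilon> / 4 + \<epsilon> / 4" if "x \<in> {A..B}" for x
  proof (rule monotone_approx_between_grid_points[OF G_mono \<open>mono N\<close> \<open>0 < n\<close>])
    show "x \<in> {t 0..t n}"
      using that \<open>t 0 = A\<close> \<open>t n = B\<close> by simp
    show "\<bar>?G (t i) - N (t i)\<bar> \<le> \<epsilon> / 4" if "i \<le> n" for i
      using G_near[rule_format, OF that] \<beta>_near[rule_format, OF that] by linarith
    show "N (t (Suc i)) - N (t i) \<le> \<epsilon> / 4" if "i < n" for i
      using N_steps[rule_format, OF that] by linarith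
  qed
  then have "(SUP x\<in>{A..B}. \<bar>?G x - N x\<bar>) \<le> \<epsilon> / 4 + \<epsilon> / 4"
    using \<open>A < B\<close> by (intro cSUP_least) auto
  then have "(SUP x\<in>{A..B}. \<bar>?G x - N x\<bar>) < \<epsilon>"
    using \<open>0 < \<epsilon>\<close> by linarith
  with \<open>valid_pnn 2 d W \<beta>\<close> show "\<exists>As Bs L d W c \<beta>. As < Bs \<and> valid_pnn L d W \<beta> \<and>
           (SUP x\<in>{A..B}. \<bar>pnn_norm L d W c \<beta> As Bs x - N x\<bar>) < \<epsilon>"
    using \<open>A < B\<close> by (intro exI[of _ "A - 1"] exI[of _ "B + 1"] exI[of _ 2]) auto
qed

end
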